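(* Let $(a,b)\in\mathbb{N}^2$ with $a\ge 2$, and let $\ell$ be a prime with $\ell>\max(a,b)$. Write the base-$a$ expansion of $\ell$ as \[ \ell = a_d a^{d-1}+a_{d-1}a^{d-2}+\cdots+a_2 a+a_1,\qquad 0\le a_i\le a-1 \text{ for all } i, \] and define \[ \mathcal{P}(x):=\frac{x\,b}{\ell\,a}\left(a_d x^{d-1}+a_{d-1}x^{d-2}+\cdots+a_1\right). \] Then $\mathcal{P}(a)=b$, i.e. $(a,b)$ lies on the curve $y=\mathcal{P}(x)$, and there is no lattice point on the portion of this curve joining $(0,0)$ to $(a,b)$; that is, for every integer $t$ with $0<t<a$, $\mathcal{P}(t)\notin\mathbb{Z}$.
   Context: $\mathbb{N}$ denotes the positive integers. The $a_i$ are the base-$a$ digits of $\ell$ (with $a_1$ the units digit). *)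

theory Defs
  imports Complex_Main "HOL-Computational_Algebra.Primes"
begin

definition curveP :: "nat \<Rightarrow> nat \<Rightarrow> nat \<Rightarrow> nat \<Rightarrow> (nat \<Rightarrow> nat) \<Rightarrow> real \<Rightarrow> real" where
  "curveP a b l d dig x =
     x * real b / (real l * real a) * (\<Sum>i=1..d. real (dig i) * x ^ (i - 1))"

end

theory Submission
  imports Defs
begin

text \<open>Write \<open>S(x) = \<Sum> dig i x^(i-1)\<close>, so that \<open>P(x) = x b S(x) / (l a)\<close> and \<open>S(a) = l\<close>;
  hence \<open>P(a) = b\<close>. Since \<open>l > a\<close> exceeds every single digit, some digit other than the
  units digit is nonzero, so \<open>0 < S(t) < S(a) = l\<close> for \<open>0 < t < a\<close>. As also \<open>t, b < l\<close>,
  the prime \<open>l\<close> does not divide \<open>t b S(t)\<close>, so \<open>l a\<close> does not divide it either and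
  \<open>P(t)\<close> is not an integer.\<close>

definition digit_poly :: "(nat \<Rightarrow> nat) \<Rightarrow> nat \<Rightarrow> nat \<Rightarrow> nat" where
  "digit_poly dig d x = (\<Sum>i=1..d. dig i * x ^ (i - 1))"

lemma curveP_of_nat:
  "curveP a b l d dig (real x) = real (x * b * digit_poly dig d x) / real (l * a)"
  unfolding curveP_def digit_poly_def by simp

lemma of_nat_div_of_nat_in_Ints_iff:
  "(real m / real n \<in> \<int>) \<longleftrightarrow> n = 0 \<or> n dvd m"
  using of_int_div_of_int_in_Ints_iff[of "int m" "int n", where 'a = real] by simp

lemma digit_poly_strict_mono:
  assumes "n < m" and "j \<in> {2..d}" and "dig j > 0"
  shows "digit_poly dig d n < digit_poly dig d m"
  unfolding digit_poly_def
proof (rule sum_strict_mono_ex1)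
  show "\<forall>i\<in>{1..d}. dig i * n ^ (i - 1) \<le> dig i * m ^ (i - 1)"
    using assms(1) by (simp add: power_mono)
  show "\<exists>i\<in>{1..d}. dig i * n ^ (i - 1) < dig i * m ^ (i - 1)"
    using assms by (intro bexI[of _ j]) (auto intro!: power_strict_mono)
qed simp

lemma digit_poly_pos:
  assumes "0 < n" and "j \<in> {1..d}" and "dig j > 0"
  shows "0 < digit_poly dig d n"
proof -
  have "0 < dig j * n ^ (j - 1)" using assms by simp
  also have "\<dots> \<le> digit_poly dig d n"
    unfolding digit_poly_def by (rule member_le_sum) (use assms in auto)
  finally show ?thesis .
qed

lemma digit_poly_units_only:
  assumes "\<forall>j\<in>{2..d}. dig j = 0"
  shows "digit_poly dig d x = (if d = 0 then 0 else dig 1)"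
proof -
  have "digit_poly dig d x = (\<Sum>i\<in>{1..d}. if i = 1 then dig 1 else 0)"
    unfolding digit_poly_def by (intro sum.cong refl) (use assms in auto)
  also have "\<dots> = (if d = 0 then 0 else dig 1)" by simp
  finally show ?thesis .
qed

lemma digit_poly_higher_digit_nonzero:
  assumes "0 < a" and "\<forall>i\<in>{1..d}. dig i < a" and "a \<le> digit_poly dig d a"
  shows "\<exists>j\<in>{2..d}. dig j > 0"
proof (rule ccontr)
  assume "\<not> (\<exists>j\<in>{2..d}. dig j > 0)"
  then have "digit_poly dig d a = (if d = 0 then 0 else dig 1)"
    by (intro digit_poly_units_only) auto
  moreover have "d \<noteq> 0 \<Longrightarrow> dig 1 < a" using assms(2) by simp
  ultimately show False using assms(1,3) by (auto split: if_splits)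
qed

lemma prime_not_dvd_prod_of_smaller:
  fixes p :: nat
  assumes "prime p" and "0 < x" "x < p" and "0 < y" "y < p" and "0 < z" "z < p"
  shows "\<not> p dvd x * y * z"
proof
  assume "p dvd x * y * z"
  then have "p dvd x \<or> p dvd y \<or> p dvd z" using assms(1) by (simp add: prime_dvd_mult_iff)
  then show False using assms(2-7) by (auto dest: dvd_imp_le)
qed

theorem theorem2p1:
  fixes a b l d :: nat and dig :: "nat \<Rightarrow> nat"
  assumes "a \<ge> 2" and "b \<ge> 1"
    and "prime l" and "l > max a b"
    and "\<forall>i\<in>{1..d}. dig i \<le> a - 1"
    and "l = (\<Sum>i=1..d. dig i * a ^ (i - 1))"
  shows "curveP a b l d dig (real a) = real b
         \<and> (\<forall>t::int. 0 < t \<and> t < int a \<longrightarrow> curveP a b l d dig (real_of_int t) \<notin> \<int>)"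
proof -
  have S_a: "digit_poly dig d a = l" using assms(6) by (simp add: digit_poly_def)
  have l_pos: "0 < l" using assms(3) by (rule prime_gt_0_nat)
  have "\<forall>i\<in>{1..d}. dig i < a" using assms(1,5) by auto
  then obtain j where j: "j \<in> {2..d}" "dig j > 0"
    using digit_poly_higher_digit_nonzero[of a d dig] S_a assms(1,4) by auto
  have "curveP a b l d dig (real a) = real b"
    using curveP_of_nat[of a b l d dig a] S_a l_pos assms(1) by simp
  moreover have "curveP a b l d dig (real_of_int t) \<notin> \<int>" if "0 < t" and "t < int a" for t
  proof -
    obtain n where t: "t = int n" and n: "0 < n" "n < a"
      using \<open>0 < t\<close> \<open>t < int a\<close> by (auto elim: pos_int_cases)
    have "0 < digit_poly dig d n" using digit_poly_pos[of n j d dig] n j by simp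
    moreover have "digit_poly dig d n < l"
      using digit_poly_strict_mono[of n a j d dig] n(2) j S_a by simp
    ultimately have "\<not> l dvd n * b * digit_poly dig d n"
      using prime_not_dvd_prod_of_smaller[OF assms(3)] n assms(2,4) by simp
    then have "\<not> l * a dvd n * b * digit_poly dig d n" by (meson dvd_mult_left)
    moreover have "l * a \<noteq> 0" using l_pos assms(1) by simp
    moreover have "curveP a b l d dig (real_of_int t)
        = real (n * b * digit_poly dig d n) / real (l * a)"
      using curveP_of_nat[of a b l d dig n] by (simp add: t)
    ultimately show ?thesis by (simp only: of_nat_div_of_nat_in_Ints_iff) blast
  qed
  ultimately show ?thesis by blast
qed

end
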